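(* A $3$-cochain $f\in\mathrm{Hom}_{\mathbb{Z}G}(K_3,\mathbb{k}^* )$ is a coboundary if and only if: - for all $1\le i<j\le k$ there exist $g_{i,j}\in\mathbb{k}^*$ with $f_{i,i,j}=g_{i,j}^{m_i}$ and $f_{i,j,j}=g_{i,j}^{-m_j}$; - $f_{l,l,l}=1$ for all $1\le l\le k$; - $f_{r,s,t}=1$ for all $1\le r<s<t\le k$.
   Context: Let $\mathbb{k}$ be a field and $\mathbb{k}^*$ its multiplicative group, regarded as a trivial $G$-module, where $G=\mathbb{Z}_{m_1}\times\cdots\times\mathbb{Z}_{m_k}$ with fixed generator $g_i$ of the $i$-th factor. Put $T_i=g_i-1$ and $N_i=\sum_{j=0}^{m_i-1}g_i^j$. $K_\bullet$ is the free $\mathbb{Z}G$-resolution of $\mathbb{Z}$ with $K_p$ free on generators $\Psi(a_1,\dots,a_k)$, $a_i\ge0$, $\sum a_i=p$. Its differential is $d=\sum_i d_i$, where $d_i\Psi(a)$ equals: - $0$ if $a_i=0$; - $(-1)^{\sum_{l<i}a_l}N_i\Psi(a-\epsilon_i)$ if $a_i\ne0$ is even; - $(-1)^{\sum_{l<i}a_l}T_i\Psi(a-\epsilon_i)$ if $a_i$ is odd. Cochains are $\mathrm{Hom}_{\mathbb{Z}G}(K_\bullet,\mathbb{k}^* )$ with $d^*f=f\circ d$ (written multiplicatively); $f$ is a coboundary if $f=d^*g$ for some $g\in\mathrm{Hom}_{\mathbb{Z}G}(K_2,\mathbb{k}^* )$. Notation for generators of $K_3$: $\Psi_{r,s,t}$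 ($r<s<t$) has entry $1$ in positions $r,s,t$; $\Psi_{r,r,s}$ ($r<s$) has $2$ in position $r$ and $1$ in position $s$; $\Psi_{r,s,s}$ ($r<s$) has $1$ in position $r$ and $2$ in position $s$; $\Psi_{r,r,r}$ has $3$ in position $r$; all other entries are $0$. $f_{r,s,t}$ etc. denote the values of $f$ on these generators. *)

theory Defs
  imports Main
begin

text \<open>A multi-index a = (a_1,...,a_k) is
  a function nat => nat vanishing outside {1..k}. G = Z_{m_1} x ... x Z_{m_k}
  is represented by tuples h :: nat => nat with h i < m i on {1..k}, 0 elsewhere.\<close>

definition Gcarrier :: "(nat \<Rightarrow> nat) \<Rightarrow> nat \<Rightarrow> (nat \<Rightarrow> nat) set" where
  "Gcarrier m k = {h. (\<forall>i\<in>{1..k}. h i < m i) \<and> (\<forall>i. i \<notin> {1..k} \<longrightarrow> h i = 0)}"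

text \<open>The element g_i^j of G (j-th power of the fixed generator of the i-th factor).\<close>
definition gpow :: "(nat \<Rightarrow> nat) \<Rightarrow> nat \<Rightarrow> nat \<Rightarrow> (nat \<Rightarrow> nat)" where
  "gpow m i j = (\<lambda>l. if l = i then j mod m i else 0)"

text \<open>Integral group ring ZG: integer-valued functions on G (G is finite).\<close>
definition delta :: "(nat \<Rightarrow> nat) \<Rightarrow> (nat \<Rightarrow> nat) \<Rightarrow> int" where
  "delta h = (\<lambda>x. if x = h then 1 else 0)"

definition Telt :: "(nat \<Rightarrow> nat) \<Rightarrow> nat \<Rightarrow> (nat \<Rightarrow> nat) \<Rightarrow> int" where
  "Telt m i = (\<lambda>x. delta (gpow m i 1) x - delta (\<lambda>_. 0) x)"

definition Nelt :: "(nat \<Rightarrow> nat) \<Rightarrow> nat \<Rightarrow> (nat \<Rightarrow> nat) \<Rightarrow> int" where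
  "Nelt m i = (\<lambda>x. \<Sum>j<m i. delta (gpow m i j) x)"

text \<open>Augmentation ZG -> Z; a ZG-element x acts on the trivial module k^* by c |-> c^(aug x).\<close>
definition aug :: "(nat \<Rightarrow> nat) \<Rightarrow> nat \<Rightarrow> ((nat \<Rightarrow> nat) \<Rightarrow> int) \<Rightarrow> int" where
  "aug m k x = (\<Sum>h\<in>Gcarrier m k. x h)"

text \<open>Generators Psi(a) of K_p.\<close>
definition gens :: "nat \<Rightarrow> nat \<Rightarrow> (nat \<Rightarrow> nat) set" where
  "gens k p = {a. (\<forall>i. i \<notin> {1..k} \<longrightarrow> a i = 0) \<and> (\<Sum>i\<in>{1..k}. a i) = p}"

definition unitv :: "nat \<Rightarrow> nat \<Rightarrow> nat" where
  "unitv i = (\<lambda>l. if l = i then 1 else 0)"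

text \<open>d_i Psi(a) = (dcoef m i a) * Psi(a - e_i)  (coefficient in ZG).\<close>
definition dcoef :: "(nat \<Rightarrow> nat) \<Rightarrow> nat \<Rightarrow> (nat \<Rightarrow> nat) \<Rightarrow> (nat \<Rightarrow> nat) \<Rightarrow> int" where
  "dcoef m i a = (\<lambda>x. if a i = 0 then 0
      else (-1) ^ (\<Sum>l\<in>{1..<i}. a l) *
           (if even (a i) then Nelt m i x else Telt m i x))"

text \<open>(d^* g)(Psi(a)) = g(d Psi(a)) = prod_i g(Psi(a - e_i))^(aug(coefficient)), for g
  a ZG-homomorphism into the trivial module k^*, written multiplicatively.\<close>
definition dstar :: "(nat \<Rightarrow> nat) \<Rightarrow> nat \<Rightarrow> ((nat \<Rightarrow> nat) \<Rightarrow> 'a::field) \<Rightarrow> (nat \<Rightarrow> nat) \<Rightarrow> 'a" where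
  "dstar m k g a = (\<Prod>i\<in>{1..k}. (g (\<lambda>l. a l - unitv i l)) powi (aug m k (dcoef m i a)))"

definition is_coboundary3 :: "(nat \<Rightarrow> nat) \<Rightarrow> nat \<Rightarrow> ((nat \<Rightarrow> nat) \<Rightarrow> 'a::field) \<Rightarrow> bool" where
  "is_coboundary3 m k f \<longleftrightarrow>
     (\<exists>g. (\<forall>b\<in>gens k 2. g b \<noteq> 0) \<and> (\<forall>a\<in>gens k 3. f a = dstar m k g a))"

definition Psi_rst :: "nat \<Rightarrow> nat \<Rightarrow> nat \<Rightarrow> nat \<Rightarrow> nat" where
  "Psi_rst r s t = (\<lambda>l. if l = r \<or> l = s \<or> l = t then 1 else 0)"
definition Psi_rrs :: "nat \<Rightarrow> nat \<Rightarrow> nat \<Rightarrow> nat" where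
  "Psi_rrs r s = (\<lambda>l. if l = r then 2 else if l = s then 1 else 0)"
definition Psi_rss :: "nat \<Rightarrow> nat \<Rightarrow> nat \<Rightarrow> nat" where
  "Psi_rss r s = (\<lambda>l. if l = r then 1 else if l = s then 2 else 0)"
definition Psi_rrr :: "nat \<Rightarrow> nat \<Rightarrow> nat" where
  "Psi_rrr r = (\<lambda>l. if l = r then 3 else 0)"

end

theory Submission
  imports Defs "HOL-Library.Multiset"
begin

text \<open>Since \<open>\<bbbk>\<^sup>*\<close> is a trivial module, a group ring element acts on it through its augmentation,
  which is 0 for \<open>T_i\<close> and \<open>m_i\<close> for \<open>N_i\<close>. So in \<open>d\<^sup>* g\<close> only the even nonzero coordinates
  \<open>a_i\<close> of a generator contribute, each with the factor \<open>g(\<Psi>(a - \<epsilon>_i))^(\<plusminus>m_i)\<close>. Among the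
  generators of \<open>K_3\<close> only \<open>\<Psi>_r,r,s\<close> and \<open>\<Psi>_r,s,s\<close> have such a coordinate, and both are sent to
  the same generator \<open>\<Psi>(\<epsilon>_r + \<epsilon>_s)\<close> of \<open>K_2\<close>. Hence \<open>d\<^sup>* g\<close> is \<open>g_r,s^m_r\<close> on \<open>\<Psi>_r,r,s\<close>,
  \<open>g_r,s^(-m_s)\<close> on \<open>\<Psi>_r,s,s\<close> and 1 elsewhere, and every family of values \<open>g_r,s\<close> comes from
  some 2-cochain.\<close>

lemma finite_Gcarrier: "finite (Gcarrier m k)"
proof -
  have "Gcarrier m k \<subseteq> {h. \<forall>x. (x \<in> {1..k} \<longrightarrow> h x \<in> (\<Union>i\<in>{1..k}. {..<m i})) \<and>
                              (x \<notin> {1..k} \<longrightarrow> h x = 0)}"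
    unfolding Gcarrier_def by fastforce
  moreover have "finite \<dots>" by (rule finite_set_of_finite_funs) auto
  ultimately show ?thesis by (rule finite_subset)
qed

lemma aug_delta: "h \<in> Gcarrier m k \<Longrightarrow> aug m k (delta h) = 1"
  using finite_Gcarrier[of m k] by (simp add: aug_def delta_def)

lemma gpow_in_Gcarrier:
  assumes "\<forall>i\<in>{1..k}. 0 < m i" "i \<in> {1..k}"
  shows "gpow m i j \<in> Gcarrier m k"
  using assms unfolding Gcarrier_def gpow_def by auto

lemma zero_in_Gcarrier: "\<forall>i\<in>{1..k}. 0 < m i \<Longrightarrow> (\<lambda>_. 0) \<in> Gcarrier m k"
  unfolding Gcarrier_def by auto

lemma aug_Telt:
  assumes "\<forall>i\<in>{1..k}. 0 < m i" "i \<in> {1..k}"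
  shows "aug m k (Telt m i) = 0"
proof -
  have "aug m k (Telt m i) = aug m k (delta (gpow m i 1)) - aug m k (delta (\<lambda>_. 0))"
    unfolding aug_def Telt_def by (simp add: sum_subtractf)
  then show ?thesis
    by (simp add: aug_delta gpow_in_Gcarrier[OF assms] zero_in_Gcarrier[OF assms(1)])
qed

lemma aug_Nelt:
  assumes "\<forall>i\<in>{1..k}. 0 < m i" "i \<in> {1..k}"
  shows "aug m k (Nelt m i) = int (m i)"
proof -
  have "aug m k (Nelt m i) = (\<Sum>j<m i. aug m k (delta (gpow m i j)))"
    unfolding aug_def Nelt_def by (rule sum.swap)
  then show ?thesis by (simp add: aug_delta gpow_in_Gcarrier[OF assms])
qed

lemma aug_dcoef:
  assumes "\<forall>i\<in>{1..k}. 0 < m i" "i \<in> {1..k}"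
  shows "aug m k (dcoef m i a) =
    (if a i \<noteq> 0 \<and> even (a i) then (-1) ^ (\<Sum>l\<in>{1..<i}. a l) * int (m i) else 0)"
proof -
  have aug_scale: "aug m k (\<lambda>x. c * F x) = c * aug m k F" for c F
    unfolding aug_def by (simp add: sum_distrib_left)
  show ?thesis
    unfolding dcoef_def
    using aug_scale aug_Nelt[OF assms] aug_Telt[OF assms]
    by (cases "a i = 0"; cases "even (a i)") (simp_all add: aug_def)
qed

lemma dstar_eq_prod_even:
  assumes "\<forall>i\<in>{1..k}. 0 < m i"
  shows "dstar m k g a = (\<Prod>i\<in>{1..k}. if a i \<noteq> 0 \<and> even (a i)
     then g (\<lambda>l. a l - unitv i l) powi ((-1) ^ (\<Sum>l\<in>{1..<i}. a l) * int (m i)) else 1)"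
  unfolding dstar_def by (rule prod.cong) (auto simp: aug_dcoef[OF assms])

lemma dstar_Psi_rrr: "\<forall>i\<in>{1..k}. 0 < m i \<Longrightarrow> dstar m k g (Psi_rrr r) = 1"
  unfolding dstar_eq_prod_even Psi_rrr_def by (rule prod.neutral) auto

lemma dstar_Psi_rst: "\<forall>i\<in>{1..k}. 0 < m i \<Longrightarrow> dstar m k g (Psi_rst r s t) = 1"
  unfolding dstar_eq_prod_even Psi_rst_def by (rule prod.neutral) auto

definition Psi_rs :: "nat \<Rightarrow> nat \<Rightarrow> nat \<Rightarrow> nat" where
  "Psi_rs r s = (\<lambda>l. if l = r \<or> l = s then 1 else 0)"

lemma dstar_Psi_rrs:
  assumes "\<forall>i\<in>{1..k}. 0 < m i" "r \<in> {1..k}" "r < s"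
  shows "dstar m k g (Psi_rrs r s) = g (Psi_rs r s) ^ m r"
proof -
  have face: "(\<lambda>l. Psi_rrs r s l - unitv r l) = Psi_rs r s"
    using assms by (auto simp: Psi_rrs_def unitv_def Psi_rs_def)
  have sign: "(\<Sum>l\<in>{1..<r}. Psi_rrs r s l) = 0"
    using assms by (auto simp: Psi_rrs_def)
  have "dstar m k g (Psi_rrs r s) = (\<Prod>i\<in>{1..k}. if i = r then g (Psi_rs r s) ^ m r else 1)"
    unfolding dstar_eq_prod_even[OF assms(1)]
    by (rule prod.cong) (use assms face sign in \<open>auto simp: Psi_rrs_def power_int_of_nat\<close>)
  then show ?thesis using assms(2) by simp
qed

lemma dstar_Psi_rss:
  assumes "\<forall>i\<in>{1..k}. 0 < m i" "s \<in> {1..k}" "1 \<le> r" "r < s"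
  shows "dstar m k g (Psi_rss r s) = g (Psi_rs r s) powi (- int (m s))"
proof -
  have face: "(\<lambda>l. Psi_rss r s l - unitv s l) = Psi_rs r s"
    using assms by (auto simp: Psi_rss_def unitv_def Psi_rs_def)
  have "(\<Sum>l\<in>{1..<s}. Psi_rss r s l) = (\<Sum>l\<in>{1..<s}. if l = r then 1 else 0)"
    by (rule sum.cong) (auto simp: Psi_rss_def)
  then have sign: "(\<Sum>l\<in>{1..<s}. Psi_rss r s l) = 1"
    using assms by simp
  have "dstar m k g (Psi_rss r s) =
      (\<Prod>i\<in>{1..k}. if i = s then g (Psi_rs r s) powi (- int (m s)) else 1)"
    unfolding dstar_eq_prod_even[OF assms(1)]
    by (rule prod.cong) (use assms face sign in \<open>auto simp: Psi_rss_def\<close>)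
  then show ?thesis using assms(2) by simp
qed

lemma gens3_cases:
  assumes "a \<in> gens k 3"
  obtains r where "1 \<le> r" "r \<le> k" "a = Psi_rrr r"
  | r s where "1 \<le> r" "r < s" "s \<le> k" "a = Psi_rrs r s"
  | r s where "1 \<le> r" "r < s" "s \<le> k" "a = Psi_rss r s"
  | r s t where "1 \<le> r" "r < s" "s < t" "t \<le> k" "a = Psi_rst r s t"
proof -
  have outside: "\<And>i. i \<notin> {1..k} \<Longrightarrow> a i = 0" and total: "(\<Sum>i\<in>{1..k}. a i) = 3"
    using assms unfolding gens_def by auto
  \<comment> \<open>Sort the multiset in which each index \<open>i\<close> occurs \<open>a i\<close> times.\<close>
  define M where "M = (\<Sum>i\<in>{1..k}. replicate_mset (a i) i)"
  have count_M: "count M j = a j" for j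
    using outside[of j] by (simp add: M_def count_sum)
  have "size M = 3" using total by (simp add: M_def size_multiset_sum)
  then have "length (sorted_list_of_multiset M) = 3"
    by (metis mset_sorted_list_of_multiset size_mset)
  then obtain x y z where xyz: "sorted_list_of_multiset M = [x, y, z]"
    by (auto simp: numeral_3_eq_3 length_Suc_conv)
  then have M_xyz: "M = {#x, y, z#}" and "x \<le> y" "y \<le> z"
    by (metis mset.simps mset_sorted_list_of_multiset add_mset_commute,
        metis sorted_sorted_list_of_multiset sorted2 sorted1,
        metis sorted_sorted_list_of_multiset sorted2 sorted1 list.sel(3))
  have a_xyz: "a j = of_bool (j = x) + of_bool (j = y) + of_bool (j = z)" for j
    using count_M[of j] M_xyz by auto
  have "{x, y, z} \<subseteq> {1..k}"
    using outside a_xyz by (metis insert_subset empty_subsetI neq0_conv add_is_0 of_bool_eq_0_iff)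
  then have bounds: "1 \<le> x" "z \<le> k" by auto
  from \<open>x \<le> y\<close> \<open>y \<le> z\<close>
  consider "x = y" "y = z" | "x = y" "y < z" | "x < y" "y = z" | "x < y" "y < z"
    by linarith
  then show ?thesis
  proof cases
    case 1
    then have "a = Psi_rrr x" by (auto simp: a_xyz Psi_rrr_def)
    with that(1) bounds 1 show ?thesis by simp
  next
    case 2
    then have "a = Psi_rrs x z" by (auto simp: a_xyz Psi_rrs_def)
    with that(2) bounds 2 show ?thesis by simp
  next
    case 3
    then have "a = Psi_rss x z" by (auto simp: a_xyz Psi_rss_def)
    with that(3) bounds 3 show ?thesis by simp
  next
    case 4
    then have "a = Psi_rst x y z" by (auto simp: a_xyz Psi_rst_def)
    with that(4) bounds 4 show ?thesis by simp
  qed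
qed

lemma Psi_rrr_in_gens: "r \<in> {1..k} \<Longrightarrow> Psi_rrr r \<in> gens k 3"
  unfolding gens_def Psi_rrr_def by auto

lemma Psi_rrs_in_gens: "r \<in> {1..k} \<Longrightarrow> s \<in> {1..k} \<Longrightarrow> r \<noteq> s \<Longrightarrow> Psi_rrs r s \<in> gens k 3"
  unfolding gens_def Psi_rrs_def by (auto simp: sum.If_cases Int_absorb1 Int_Diff)

lemma Psi_rss_in_gens: "r \<in> {1..k} \<Longrightarrow> s \<in> {1..k} \<Longrightarrow> r \<noteq> s \<Longrightarrow> Psi_rss r s \<in> gens k 3"
  unfolding gens_def Psi_rss_def by (auto simp: sum.If_cases Int_absorb1 Int_Diff)

lemma Psi_rst_in_gens:
  "{r, s, t} \<subseteq> {1..k} \<Longrightarrow> distinct [r, s, t] \<Longrightarrow> Psi_rst r s t \<in> gens k 3"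
  unfolding gens_def Psi_rst_def by (auto simp: sum.If_cases Int_absorb1 Collect_disj_eq insert_commute)

lemma Psi_rs_in_gens: "r \<in> {1..k} \<Longrightarrow> s \<in> {1..k} \<Longrightarrow> r \<noteq> s \<Longrightarrow> Psi_rs r s \<in> gens k 2"
  unfolding gens_def Psi_rs_def by (auto simp: sum.If_cases Int_absorb1 Collect_disj_eq)

text \<open>Reads off the two support indices \<open>r < s\<close> of \<open>\<Psi>(\<epsilon>_r + \<epsilon>_s)\<close>; its junk values on the
  generators \<open>\<Psi>(2\<epsilon>_r)\<close> of \<open>K_2\<close> never enter \<open>d\<^sup>*\<close> on \<open>K_3\<close>.\<close>
definition pair_cochain :: "(nat \<Rightarrow> nat \<Rightarrow> 'a) \<Rightarrow> (nat \<Rightarrow> nat) \<Rightarrow> 'a" where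
  "pair_cochain c b = (let r = LEAST l. 0 < b l in c r (LEAST l. r < l \<and> 0 < b l))"

lemma pair_cochain_Psi_rs: "r < s \<Longrightarrow> pair_cochain c (Psi_rs r s) = c r s"
proof -
  assume "r < s"
  then have "(LEAST l. 0 < Psi_rs r s l) = r" "(LEAST l. r < l \<and> 0 < Psi_rs r s l) = s"
    by (auto intro!: Least_equality simp: Psi_rs_def)
  then show ?thesis by (simp add: pair_cochain_def)
qed

lemma is_coboundary3_pair_cochain:
  fixes f :: "(nat \<Rightarrow> nat) \<Rightarrow> 'a::field"
  assumes pos: "\<forall>i\<in>{1..k}. 0 < m i"
    and c0: "\<And>i j. c i j \<noteq> 0"
    and pairs: "\<And>i j. 1 \<le> i \<Longrightarrow> i < j \<Longrightarrow> j \<le> k \<Longrightarrow>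
      f (Psi_rrs i j) = c i j ^ m i \<and> f (Psi_rss i j) = c i j powi (- int (m j))"
    and rrr: "\<And>l. 1 \<le> l \<Longrightarrow> l \<le> k \<Longrightarrow> f (Psi_rrr l) = 1"
    and rst: "\<And>r s t. 1 \<le> r \<Longrightarrow> r < s \<Longrightarrow> s < t \<Longrightarrow> t \<le> k \<Longrightarrow> f (Psi_rst r s t) = 1"
  shows "is_coboundary3 m k f"
proof -
  have "f a = dstar m k (pair_cochain c) a" if "a \<in> gens k 3" for a
    using that
  proof (cases rule: gens3_cases)
    case (2 r s)
    then show ?thesis
      using pairs[of r s] dstar_Psi_rrs[OF pos, of r s "pair_cochain c"] pair_cochain_Psi_rs[of r s c] by simp
  next
    case (3 r s)
    then show ?thesis
      using pairs[of r s] dstar_Psi_rss[OF pos, of s r "pair_cochain c"] pair_cochain_Psi_rs[of r s c] by simp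
  qed (simp_all add: rrr rst dstar_Psi_rrr[OF pos] dstar_Psi_rst[OF pos])
  moreover have "pair_cochain c b \<noteq> 0" for b
    by (simp add: pair_cochain_def Let_def c0)
  ultimately show ?thesis
    unfolding is_coboundary3_def by blast
qed

theorem lemma2p9:
  fixes m :: "nat \<Rightarrow> nat" and k :: nat and f :: "(nat \<Rightarrow> nat) \<Rightarrow> 'a::field"
  assumes "\<forall>i\<in>{1..k}. 0 < m i"
    and "\<forall>a\<in>gens k 3. f a \<noteq> 0"
  shows "is_coboundary3 m k f \<longleftrightarrow>
     ((\<forall>i j. 1 \<le> i \<and> i < j \<and> j \<le> k \<longrightarrow>
         (\<exists>g::'a. g \<noteq> 0 \<and> f (Psi_rrs i j) = g ^ m i \<and> f (Psi_rss i j) = g powi (- int (m j)))) \<and>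
      (\<forall>l. 1 \<le> l \<and> l \<le> k \<longrightarrow> f (Psi_rrr l) = 1) \<and>
      (\<forall>r s t. 1 \<le> r \<and> r < s \<and> s < t \<and> t \<le> k \<longrightarrow> f (Psi_rst r s t) = 1))"
    (is "_ \<longleftrightarrow> ?pairs \<and> ?rrr \<and> ?rst")
proof
  assume "is_coboundary3 m k f"
  then obtain g where g: "\<forall>b\<in>gens k 2. g b \<noteq> 0" and f: "\<forall>a\<in>gens k 3. f a = dstar m k g a"
    unfolding is_coboundary3_def by blast
  have ?pairs
  proof (intro allI impI)
    fix i j assume ij: "1 \<le> i \<and> i < j \<and> j \<le> k"
    then have "Psi_rs i j \<in> gens k 2" "Psi_rrs i j \<in> gens k 3" "Psi_rss i j \<in> gens k 3"
      by (simp_all add: Psi_rs_in_gens Psi_rrs_in_gens Psi_rss_in_gens)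
    with ij show "\<exists>g. g \<noteq> 0 \<and> f (Psi_rrs i j) = g ^ m i \<and> f (Psi_rss i j) = g powi (- int (m j))"
      using g f dstar_Psi_rrs[OF assms(1), of i j g] dstar_Psi_rss[OF assms(1), of j i g]
      by (intro exI[of _ "g (Psi_rs i j)"]) auto
  qed
  moreover have ?rrr using f Psi_rrr_in_gens dstar_Psi_rrr[OF assms(1)] by auto
  moreover have ?rst using f Psi_rst_in_gens dstar_Psi_rst[OF assms(1)] by auto
  ultimately show "?pairs \<and> ?rrr \<and> ?rst" by blast
next
  assume conds: "?pairs \<and> ?rrr \<and> ?rst"
  define admissible where "admissible i j c \<longleftrightarrow> c \<noteq> 0 \<and> (1 \<le> i \<and> i < j \<and> j \<le> k \<longrightarrow>
      f (Psi_rrs i j) = c ^ m i \<and> f (Psi_rss i j) = c powi (- int (m j)))" for i j and c :: 'a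
  have "\<exists>c. admissible i j c" for i j
    using conds by (cases "1 \<le> i \<and> i < j \<and> j \<le> k") (auto simp: admissible_def intro: exI[of _ 1])
  then have c: "admissible i j (SOME c. admissible i j c)" for i j
    by (rule someI_ex)
  show "is_coboundary3 m k f"
    by (rule is_coboundary3_pair_cochain[OF assms(1), of "\<lambda>i j. SOME c. admissible i j c"])
      (use c conds in \<open>simp_all add: admissible_def\<close>)
qed

end
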